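(* Let $d^0, d^{L+1} \in \mathbb{N}$ and let $\mathcal{F} = (\mathbb{R}^{d^{L+1}})^{\mathbb{R}^{d^0}}$ be the space of all functions $f \colon \mathbb{R}^{d^0} \to \mathbb{R}^{d^{L+1}}$, equipped with the product topology and the usual Borel product $\sigma$-algebra. Let $(P_{f_n})_{n \geq 1}$ be a sequence of probability distributions on $\mathcal{F}$ (the function-space priors of a sequence of Bayesian neural networks) and let $P_f$ be a probability distribution on $\mathcal{F}$ such that $P_{f_n} \Rightarrow P_f$ (weak convergence). Let $D = \{(x_i, y_i)\}_{i=1}^m$ be a fixed finite dataset with inputs $\mathcal{X} = \{x_i\}_{i=1}^m \subset \mathbb{R}^{d^0}$, and for $f \in \mathcal{F}$ write $f(\mathcal{X}) = [f(x)]_{x \in \mathcal{X}} \in \mathbb{R}^{|D| d^{L+1}}$. Let $\ell \colon \mathbb{R}^{|D| d^{L+1}} \to [0,\infty)$ be a continuous bounded likelihood function satisfying the likelihood assumption described in the context, and assume $\int \ell(f(\mathcal{X}))\, dP_f(f) > 0$. Let $P_{f_n \mid D}$ and $P_{f \mid D}$ denote the Bayesian posteriors induced by the likelihood $\ell$ and the priors $P_{f_n}$ and $P_f$ respectively, i.e. the probability measures on $\mathcal{F}$ with $$\frac{dP_{f_n\mid D}}{dP_{f_n}}(f) = \frac{\ell(f(\mathcal{X}))}{\int \ell(g(\mathcal{X}))\,dP_{f_n}(g)}, \qquad \frac{dP_{f\mid D}}{dP_{f}}(f) = \frac{\ell(f(\mathcal{X}))}{\int \ell(g(\mathcal{X}))\,dP_{f}(g)}.$$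 Then $P_{f_n \mid D} \Rightarrow P_{f \mid D}$.
   Context: Weak convergence $P_n \Rightarrow P$ means $\int h\, dP_n \to \int h \, dP$ for every real-valued continuous bounded $h$. Likelihood assumption: the targets $\mathcal{Y} = \{y_i\}_{i=1}^m$ depend on the network parameters $\theta_n$ and the inputs $\mathcal{X}$ only through the network outputs $f_n(\mathcal{X}) = [f_n(x)]_{x\in\mathcal{X}} \in \mathbb{R}^{|D| d^{L+1}}$; there exists a measure $\nu$ such that the conditional distribution $P_{\mathcal{Y} \mid f_n(\mathcal{X})}$ is absolutely continuous with respect to $\nu$ for every value of $f_n(\mathcal{X})$; and the likelihood $\ell_n(f_n(\mathcal{X})) := \frac{dP_{\mathcal{Y} \mid f_n(\mathcal{X})}}{d\nu}(\mathcal{Y})$, viewed as a function of $f_n(\mathcal{X})$, satisfies $\ell_n = \ell$ for all $n$, with $\ell \colon \mathbb{R}^{|D| d^{L+1}} \to [0,\infty)$ continuous and bounded. (Examples: Gaussian likelihood $\ell \propto \exp\{-\frac{1}{2\sigma^2}\sum_i \|y_i - f_n(x_i)\|^2\}$, or categorical likelihood with softmax.) *)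

theory Defs
  imports "HOL-Probability.Probability"
begin

text \<open>The type of functions carries the product topology (Function_Topology).\<close>
definition fun_space :: "('a::topological_space \<Rightarrow> 'b::topological_space) measure" where
  "fun_space = PiM UNIV (\<lambda>_. borel)"

definition weak_conv :: "(nat \<Rightarrow> 'a::topological_space measure) \<Rightarrow> 'a measure \<Rightarrow> bool" where
  "weak_conv Pn P \<longleftrightarrow>
     (\<forall>h :: 'a \<Rightarrow> real. h \<in> borel_measurable P \<and> continuous_on UNIV h \<and> bounded (range h) \<longrightarrow>
        (\<lambda>n. \<integral>x. h x \<partial>(Pn n)) \<longlonglongrightarrow> (\<integral>x. h x \<partial>P))"

definition posterior :: "'a measure \<Rightarrow> ('a \<Rightarrow> real) \<Rightarrow> 'a measure" where
  "posterior P L = density P (\<lambda>f. ennreal (L f / (\<integral>g. L g \<partial>P)))"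

end

theory Submission
  imports Defs
begin

text \<open>Integrating a test function h against the posterior gives the ratio
  \<open>(\<integral> L h dP) / (\<integral> L dP)\<close> of two prior integrals. When the likelihood L is
  bounded and continuous, so is \<open>L h\<close>, hence weak convergence of the priors makes
  numerator and denominator converge, and the ratio converges because the limiting
  evidence \<open>\<integral> L dP\<close> is positive. The likelihood \<open>f \<mapsto> lik (f(X))\<close> is
  continuous and measurable on the function space because it only depends on finitely
  many evaluations of f. The argument never uses that the priors are probability measures.\<close>

lemma weak_convI:
  fixes P :: "'a::topological_space measure"
  assumes "\<And>h :: 'a \<Rightarrow> real. h \<in> borel_measurable P \<Longrightarrow> continuous_on UNIV h \<Longrightarrow>
      bounded (range h) \<Longrightarrow> (\<lambda>n. \<integral>x. h x \<partial>Pn n) \<longlonglongrightarrow> (\<integral>x. h x \<partial>P)"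
  shows "weak_conv Pn P"
  unfolding weak_conv_def using assms by simp

lemma weak_convD:
  fixes h :: "'a::topological_space \<Rightarrow> real"
  assumes "weak_conv Pn P" "h \<in> borel_measurable P" "continuous_on UNIV h" "bounded (range h)"
  shows "(\<lambda>n. \<integral>x. h x \<partial>Pn n) \<longlonglongrightarrow> (\<integral>x. h x \<partial>P)"
  using assms unfolding weak_conv_def by blast

lemma bounded_range_mult:
  fixes f g :: "'a \<Rightarrow> 'b::real_normed_algebra"
  assumes "bounded (range f)" "bounded (range g)"
  shows "bounded (range (\<lambda>x. f x * g x))"
proof -
  obtain B C where B: "\<And>x. norm (f x) \<le> B" and C: "\<And>x. norm (g x) \<le> C"
    using assms unfolding bounded_iff by blast
  have "norm (f x * g x) \<le> B * C" for x
  proof -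
    have "norm (f x * g x) \<le> norm (f x) * norm (g x)" by (rule norm_mult_ineq)
    also have "\<dots> \<le> B * C"
      by (rule mult_mono[OF B C order_trans[OF norm_ge_zero B] norm_ge_zero])
    finally show ?thesis .
  qed
  then show ?thesis unfolding bounded_iff by blast
qed

lemma borel_measurable_vec_lambda:
  fixes g :: "'a \<Rightarrow> 'i::finite \<Rightarrow> 'b::euclidean_space"
  assumes "\<And>i. (\<lambda>x. g x i) \<in> borel_measurable M"
  shows "(\<lambda>x. \<chi> i. g x i) \<in> borel_measurable M"
proof -
  have "(\<lambda>x. (\<chi> i. g x i) \<bullet> b) \<in> borel_measurable M" if "b \<in> Basis" for b
  proof -
    from that obtain i u where b: "b = axis i u" "u \<in> Basis" by (auto simp: Basis_vec_def)
    have "(\<lambda>x. (\<chi> i. g x i) \<bullet> b) = (\<lambda>x. g x i \<bullet> u)" by (simp add: b inner_axis)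
    also have "\<dots> \<in> borel_measurable M" using assms[of i] by measurable
    finally show ?thesis .
  qed
  then show ?thesis by (subst borel_measurable_euclidean_space) auto
qed

lemma borel_measurable_fun_space_eval_points:
  fixes X :: "'m::finite \<Rightarrow> 'a::topological_space"
  shows "(\<lambda>f::'a \<Rightarrow> 'b::euclidean_space. \<chi> i. f (X i)) \<in> borel_measurable fun_space"
  unfolding fun_space_def
  by (rule borel_measurable_vec_lambda) (rule measurable_component_singleton, simp)

lemma continuous_on_eval_points:
  fixes X :: "'m::finite \<Rightarrow> 'a::topological_space"
  shows "continuous_on UNIV (\<lambda>f::'a \<Rightarrow> 'b::real_normed_vector. \<chi> i. f (X i))"
  by (intro continuous_on_vec_lambda continuous_on_product_coordinates)

lemma integral_posterior:
  fixes h :: "'a \<Rightarrow> real"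
  assumes L: "L \<in> borel_measurable M" "\<And>x. L x \<ge> 0" and h: "h \<in> borel_measurable M"
  shows "(\<integral>x. h x \<partial>posterior M L) = (\<integral>x. L x * h x \<partial>M) / (\<integral>x. L x \<partial>M)"
proof -
  have "(\<integral>x. L x \<partial>M) \<ge> 0" using L(2) by (simp add: integral_nonneg)
  then have "(\<integral>x. h x \<partial>posterior M L) = (\<integral>x. (L x / (\<integral>x. L x \<partial>M)) *\<^sub>R h x \<partial>M)"
    unfolding posterior_def using L h by (intro integral_density) auto
  also have "\<dots> = (\<integral>x. L x * h x / (\<integral>x. L x \<partial>M) \<partial>M)" by simp
  also have "\<dots> = (\<integral>x. L x * h x \<partial>M) / (\<integral>x. L x \<partial>M)" by (rule integral_divide_zero)
  finally show ?thesis .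
qed

lemma weak_conv_posterior:
  fixes L :: "'a::topological_space \<Rightarrow> real"
  assumes conv: "weak_conv Pn P" and sets_eq: "\<And>n. sets (Pn n) = sets P"
    and L_meas: "L \<in> borel_measurable P" and L_cont: "continuous_on UNIV L"
    and L_bdd: "bounded (range L)" and L_nonneg: "\<And>x. L x \<ge> 0"
    and evidence: "(\<integral>x. L x \<partial>P) \<noteq> 0"
  shows "weak_conv (\<lambda>n. posterior (Pn n) L) (posterior P L)"
proof (rule weak_convI)
  fix h :: "'a \<Rightarrow> real"
  assume "h \<in> borel_measurable (posterior P L)" and h_cont: "continuous_on UNIV h"
    and h_bdd: "bounded (range h)"
  then have h_meas: "h \<in> borel_measurable P" by (simp add: posterior_def)
  have meas_n: "g \<in> borel_measurable (Pn n)" if "g \<in> borel_measurable P" for g :: "'a \<Rightarrow> real" and n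
    using that by (simp add: measurable_cong_sets[OF sets_eq refl])
  have numerator: "(\<lambda>n. \<integral>x. L x * h x \<partial>Pn n) \<longlonglongrightarrow> (\<integral>x. L x * h x \<partial>P)"
  proof (rule weak_convD[OF conv])
    show "(\<lambda>x. L x * h x) \<in> borel_measurable P" using L_meas h_meas by measurable
    show "continuous_on UNIV (\<lambda>x. L x * h x)" using L_cont h_cont by (rule continuous_on_mult)
    show "bounded (range (\<lambda>x. L x * h x))" using L_bdd h_bdd by (rule bounded_range_mult)
  qed
  have denominator: "(\<lambda>n. \<integral>x. L x \<partial>Pn n) \<longlonglongrightarrow> (\<integral>x. L x \<partial>P)"
    using conv L_meas L_cont L_bdd by (rule weak_convD)
  show "(\<lambda>n. \<integral>x. h x \<partial>posterior (Pn n) L) \<longlonglongrightarrow> (\<integral>x. h x \<partial>posterior P L)"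
    unfolding integral_posterior[OF L_meas L_nonneg h_meas]
      integral_posterior[OF meas_n[OF L_meas] L_nonneg meas_n[OF h_meas]]
    by (rule tendsto_divide[OF numerator denominator evidence])
qed

theorem proposition1:
  fixes Pn :: "nat \<Rightarrow> (real^'d0 \<Rightarrow> real^'d1) measure"
    and P :: "(real^'d0 \<Rightarrow> real^'d1) measure"
    and X :: "'m::finite \<Rightarrow> real^'d0"
    and lik :: "(real^'d1)^'m \<Rightarrow> real"
  assumes prior_n: "\<And>n. prob_space (Pn n)" "\<And>n. sets (Pn n) = sets fun_space"
    and prior: "prob_space P" "sets P = sets fun_space"
    and conv: "weak_conv Pn P"
    and lik_cont: "continuous_on UNIV lik"
    and lik_bdd: "bounded (range lik)"
    and lik_nonneg: "\<And>z. lik z \<ge> 0"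
    and evidence_pos: "(\<integral>f. lik (\<chi> i. f (X i)) \<partial>P) > 0"
  shows "weak_conv (\<lambda>n. posterior (Pn n) (\<lambda>f. lik (\<chi> i. f (X i))))
                   (posterior P (\<lambda>f. lik (\<chi> i. f (X i))))"
proof (rule weak_conv_posterior[OF conv])
  show "sets (Pn n) = sets P" for n using prior_n(2) prior(2) by simp
  have "lik \<in> borel_measurable borel" using lik_cont by (rule borel_measurable_continuous_onI)
  with borel_measurable_fun_space_eval_points
  show "(\<lambda>f. lik (\<chi> i. f (X i))) \<in> borel_measurable P"
    unfolding measurable_cong_sets[OF prior(2) refl] by (rule measurable_compose)
  show "continuous_on UNIV (\<lambda>f. lik (\<chi> i. f (X i)))"
    using continuous_on_compose2[OF lik_cont continuous_on_eval_points] by simp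
  show "bounded (range (\<lambda>f. lik (\<chi> i. f (X i))))"
    using lik_bdd by (rule bounded_subset) auto
  show "lik (\<chi> i. f (X i)) \<ge> 0" for f :: "real^'d0 \<Rightarrow> real^'d1" by (rule lik_nonneg)
  show "(\<integral>f. lik (\<chi> i. f (X i)) \<partial>P) \<noteq> 0" using evidence_pos by simp
qed

end
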